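(* Let $\kappa$ be a Mahlo cardinal and let $A\subseteq\kappa$ be a stationary set of regular cardinals. Then $\kappa\in\operatorname{spec}(A)$.
   Context: For a set $A$ of regular cardinals, $\prod A$ is the set of functions $f$ with domain $A$ and $f(a)\in a$, ordered by pointwise domination. $\operatorname{spec}(A)$ is the set of regular cardinals $\lambda$ with $(\prod A,<)\geq_T\lambda$ in the Tukey order; equivalently, regular $\lambda$ such that there exists $\mathcal{F}\subseteq\prod A$ of size $\lambda$ such that every $\lambda$-sized subset of $\mathcal{F}$ is unbounded in $(\prod A,<)$ (i.e., not pointwise dominated by a single element of $\prod A$). *)

theory Defs
  imports "HOL-Library.FuncSet" "HOL-Library.Equipollence" "HOL-Library.Countable_Set"
begin

text \<open>Ordinals are modelled as elements of an arbitrary well-ordered type; the ordinal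
  represented by k is (the order type of) its initial segment {x. x < k}.\<close>

definition is_cardinal :: "'a::wellorder \<Rightarrow> bool" where
  "is_cardinal k \<longleftrightarrow> (\<forall>m<k. \<not> ({x. x < m} \<approx> {x. x < k}))"

definition regular :: "'a::wellorder \<Rightarrow> bool" where
  "regular k \<longleftrightarrow> is_cardinal k \<and> infinite {x. x < k} \<and>
     (\<forall>X \<subseteq> {x. x < k}. (\<forall>b<k. \<exists>x\<in>X. b \<le> x) \<longrightarrow> X \<approx> {x. x < k})"

definition club :: "'a::wellorder \<Rightarrow> 'a set \<Rightarrow> bool" where
  "club k C \<longleftrightarrow> C \<subseteq> {x. x < k} \<and> (\<forall>b<k. \<exists>c\<in>C. b \<le> c) \<and>
     (\<forall>g<k. (\<exists>c\<in>C. c < g) \<and> (\<forall>b<g. \<exists>c\<in>C. b < c \<and> c < g) \<longrightarrow> g \<in> C)"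

definition stationary :: "'a::wellorder \<Rightarrow> 'a set \<Rightarrow> bool" where
  "stationary k S \<longleftrightarrow> S \<subseteq> {x. x < k} \<and> (\<forall>C. club k C \<longrightarrow> S \<inter> C \<noteq> {})"

definition strong_limit :: "'a::wellorder \<Rightarrow> bool" where
  "strong_limit k \<longleftrightarrow> (\<forall>m<k. Pow {x. x < m} \<prec> {x. x < k})"

definition inaccessible :: "'a::wellorder \<Rightarrow> bool" where
  "inaccessible k \<longleftrightarrow> regular k \<and> uncountable {x. x < k} \<and> strong_limit k"

definition mahlo :: "'a::wellorder \<Rightarrow> bool" where
  "mahlo k \<longleftrightarrow> inaccessible k \<and> stationary k {l. l < k \<and> regular l}"

definition prodA :: "'a::wellorder set \<Rightarrow> ('a \<Rightarrow> 'a) set" where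
  "prodA A = PiE A (\<lambda>a. {x. x < a})"

definition bounded_in :: "'a::wellorder set \<Rightarrow> ('a \<Rightarrow> 'a) set \<Rightarrow> bool" where
  "bounded_in A G \<longleftrightarrow> (\<exists>g\<in>prodA A. \<forall>f\<in>G. \<forall>a\<in>A. f a < g a)"

definition spec :: "'a::wellorder set \<Rightarrow> 'a set" where
  "spec A = {l. regular l \<and> (\<exists>F \<subseteq> prodA A. F \<approx> {x. x < l} \<and>
                 (\<forall>G \<subseteq> F. G \<approx> {x. x < l} \<longrightarrow> \<not> bounded_in A G))}"

end

theory Submission
  imports Defs
begin

text \<open>For \<alpha> < \<kappa> let f \<alpha> a = \<alpha> when \<alpha> < a (and 0 otherwise). Any \<kappa> many of
  the f \<alpha> are indexed by a set X unbounded in \<kappa>. The points \<gamma> < \<kappa> in which X is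
  cofinal form a club, so the stationary set A contains such a point a; then the values
  f \<alpha> a = \<alpha> for \<alpha> \<in> X \<inter> a are cofinal in a, and no g a < a dominates
  them all.\<close>

lemma regular_no_greatest:
  fixes k :: "'a::wellorder"
  assumes "regular k" "b < k"
  shows "\<exists>c<k. b < c"
proof (rule ccontr)
  assume "\<not> ?thesis"
  hence "\<forall>x<k. x \<le> b" by (meson not_le)
  moreover have "{b} \<subseteq> {x. x < k}" using assms(2) by simp
  ultimately have "{b} \<approx> {x. x < k}" using assms(1) unfolding regular_def by blast
  thus False using assms(1) unfolding regular_def using eqpoll_finite_iff by blast
qed

lemma regular_countable_bounded:
  fixes k :: "'a::wellorder"
  assumes "regular k" "uncountable {x. x < k}" "S \<subseteq> {x. x < k}" "countable S"
  shows "\<exists>c<k. \<forall>x\<in>S. x < c"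
proof (rule ccontr)
  assume "\<not> ?thesis"
  hence "\<forall>b<k. \<exists>x\<in>S. b \<le> x" by (meson not_le)
  hence "S \<approx> {x. x < k}" using assms unfolding regular_def by blast
  thus False using assms countable_eqpoll eqpoll_sym by blast
qed

lemma cardinal_unbounded_if_lepoll:
  fixes k :: "'a::wellorder"
  assumes "is_cardinal k" "{x. x < k} \<lesssim> X"
  shows "\<forall>b<k. \<exists>x\<in>X. b \<le> x"
proof (rule ccontr)
  assume "\<not> ?thesis"
  then obtain b where b: "b < k" "\<forall>x\<in>X. x < b" by (meson not_le)
  have "{x. x < k} \<lesssim> {x. x < b}"
    using assms(2) b(2) lepoll_trans subset_imp_lepoll by (metis mem_Collect_eq subsetI)
  moreover have "{x. x < b} \<lesssim> {x. x < k}" using b(1) by (intro subset_imp_lepoll) auto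
  ultimately have "{x. x < b} \<approx> {x. x < k}" by (simp add: lepoll_antisym)
  thus False using assms(1) b(1) unfolding is_cardinal_def by blast
qed

lemma club_final_segment:
  fixes k :: "'a::wellorder"
  assumes "regular k" "b < k"
  shows "club k {x. b < x \<and> x < k}"
  unfolding club_def
proof (intro conjI allI impI)
  fix c assume "c < k"
  then obtain d where "d < k" "max b c < d" using regular_no_greatest assms by (metis max_less_iff_conj)
  thus "\<exists>x\<in>{x. b < x \<and> x < k}. c \<le> x" by auto
qed auto

lemma stationary_unbounded:
  fixes k :: "'a::wellorder"
  assumes "regular k" "stationary k A" "b < k"
  shows "\<exists>a\<in>A. b < a"
  using club_final_segment[OF assms(1,3)] assms(2) unfolding stationary_def by blast

definition cofinal_points :: "'a::wellorder \<Rightarrow> 'a set \<Rightarrow> 'a set" where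
  "cofinal_points k X = {g. g < k \<and> (\<forall>b<g. \<exists>x\<in>X. b \<le> x \<and> x < g)}"

lemma cofinal_points_closed:
  fixes k :: "'a::wellorder"
  assumes "g < k" "\<forall>b<g. \<exists>c\<in>cofinal_points k X. b < c \<and> c < g"
  shows "g \<in> cofinal_points k X"
  unfolding cofinal_points_def
proof (intro CollectI conjI allI impI)
  fix b assume "b < g"
  then obtain c where "c \<in> cofinal_points k X" "b < c" "c < g" using assms(2) by blast
  then obtain x where "x \<in> X" "b \<le> x" "x < c" unfolding cofinal_points_def by blast
  thus "\<exists>x\<in>X. b \<le> x \<and> x < g" using \<open>c < g\<close> by (meson less_trans)
qed (fact assms(1))

lemma cofinal_points_unbounded:
  fixes k :: "'a::wellorder"
  assumes reg: "regular k" and unc: "uncountable {x. x < k}"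
    and unb: "\<forall>b<k. \<exists>x\<in>X. b < x \<and> x < k" and b: "b < k"
  shows "\<exists>g\<in>cofinal_points k X. b \<le> g"
proof -
  define next_elem where "next_elem = (\<lambda>c. LEAST x. x \<in> X \<and> c < x \<and> x < k)"
  have next_elem: "next_elem c \<in> X \<and> c < next_elem c \<and> next_elem c < k" if "c < k" for c
    unfolding next_elem_def using unb that by (metis (mono_tags, lifting) LeastI)
  define s where "s = (\<lambda>n. (next_elem ^^ n) b)"
  have s_less: "s n < k" for n
    by (induction n) (use b next_elem in \<open>auto simp: s_def\<close>)
  have s_Suc: "s (Suc n) \<in> X" "s n < s (Suc n)" for n
    using next_elem[OF s_less[of n]] by (auto simp: s_def)
  obtain c where c: "c < k" "\<forall>n. s n < c"
    using regular_countable_bounded[OF reg unc, of "range s"] s_less by blast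
  define g where "g = (LEAST g. \<forall>n. s n \<le> g)"
  have s_le_g: "\<forall>n. s n \<le> g" unfolding g_def
    by (rule LeastI[of _ c]) (use c in \<open>auto intro: less_imp_le\<close>)
  have "g \<le> c" unfolding g_def
    by (rule Least_le) (use c in \<open>auto intro: less_imp_le\<close>)
  have "g \<in> cofinal_points k X" unfolding cofinal_points_def
  proof (intro CollectI conjI allI impI)
    show "g < k" using \<open>g \<le> c\<close> c(1) by simp
    fix b' assume "b' < g"
    hence "\<not> (\<forall>n. s n \<le> b')" unfolding g_def using not_less_Least by blast
    then obtain n where n: "b' < s n" by (meson not_le)
    have "s (Suc n) < s (Suc (Suc n))" using s_Suc by blast
    also have "\<dots> \<le> g" using s_le_g by blast
    finally show "\<exists>x\<in>X. b' \<le> x \<and> x < g" using s_Suc[of n] n by (meson less_imp_le less_trans)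
  qed
  moreover have "b \<le> g" using s_le_g by (metis funpow_0 s_def)
  ultimately show ?thesis by blast
qed

lemma club_cofinal_points:
  fixes k :: "'a::wellorder"
  assumes "regular k" "uncountable {x. x < k}"
    and "X \<subseteq> {x. x < k}" "\<forall>b<k. \<exists>x\<in>X. b \<le> x"
  shows "club k (cofinal_points k X)"
proof -
  have unb: "\<forall>b<k. \<exists>x\<in>X. b < x \<and> x < k"
  proof (intro allI impI)
    fix b assume "b < k"
    then obtain c where "c < k" "b < c" using regular_no_greatest assms(1) by blast
    then obtain x where "x \<in> X" "c \<le> x" using assms(4) by blast
    thus "\<exists>x\<in>X. b < x \<and> x < k" using \<open>b < c\<close> assms(3) by (meson less_le_trans mem_Collect_eq subsetD)
  qed
  show ?thesis unfolding club_def
  proof (intro conjI allI impI)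
    show "cofinal_points k X \<subseteq> {x. x < k}" by (auto simp: cofinal_points_def)
    show "\<exists>c\<in>cofinal_points k X. b \<le> c" if "b < k" for b
      using cofinal_points_unbounded[OF assms(1,2) unb that] .
    show "g \<in> cofinal_points k X"
      if "g < k" "(\<exists>c\<in>cofinal_points k X. c < g) \<and> (\<forall>b<g. \<exists>c\<in>cofinal_points k X. b < c \<and> c < g)"
      for g
      using cofinal_points_closed that by blast
  qed
qed

definition diag_fun :: "'a::wellorder set \<Rightarrow> 'a \<Rightarrow> 'a \<Rightarrow> 'a" where
  "diag_fun A \<alpha> = restrict (\<lambda>a. if \<alpha> < a then \<alpha> else (LEAST x. True)) A"

lemma diag_fun_in_prodA:
  fixes A :: "'a::wellorder set"
  assumes "\<forall>a\<in>A. \<exists>x. x < a"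
  shows "diag_fun A \<alpha> \<in> prodA A"
proof -
  have "(LEAST x::'a. True) < a" if "a \<in> A" for a
    using assms that by (metis Least_le le_less_trans)
  thus ?thesis unfolding prodA_def diag_fun_def by auto
qed

lemma inj_on_diag_fun:
  fixes k :: "'a::wellorder"
  assumes "\<forall>b<k. \<exists>a\<in>A. b < a"
  shows "inj_on (diag_fun A) {x. x < k}"
proof (rule inj_onI)
  fix \<alpha> \<beta> assume "\<alpha> \<in> {x. x < k}" "\<beta> \<in> {x. x < k}" and eq: "diag_fun A \<alpha> = diag_fun A \<beta>"
  then obtain a where "a \<in> A" "max \<alpha> \<beta> < a" using assms by (metis max_less_iff_conj mem_Collect_eq)
  hence "diag_fun A \<alpha> a = \<alpha>" "diag_fun A \<beta> a = \<beta>" by (simp_all add: diag_fun_def)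
  thus "\<alpha> = \<beta>" using eq by metis
qed

lemma diag_fun_image_not_bounded:
  fixes k :: "'a::wellorder"
  assumes "regular k" "uncountable {x. x < k}" "stationary k A"
    and "X \<subseteq> {x. x < k}" "\<forall>b<k. \<exists>x\<in>X. b \<le> x"
  shows "\<not> bounded_in A (diag_fun A ` X)"
proof
  assume "bounded_in A (diag_fun A ` X)"
  then obtain g where g: "g \<in> prodA A" "\<forall>x\<in>X. \<forall>a\<in>A. diag_fun A x a < g a"
    unfolding bounded_in_def by blast
  obtain a where a: "a \<in> A" "a \<in> cofinal_points k X"
    using club_cofinal_points[OF assms(1,2,4,5)] assms(3) unfolding stationary_def by blast
  have "g a < a" using g(1) a(1) unfolding prodA_def by auto
  then obtain x where x: "x \<in> X" "g a \<le> x" "x < a" using a(2) unfolding cofinal_points_def by blast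
  have "diag_fun A x a = x" using x(3) a(1) by (simp add: diag_fun_def)
  thus False using g(2) x a(1) by fastforce
qed

theorem proposition4p1:
  fixes \<kappa> :: "'a::wellorder" and A :: "'a set"
  assumes "mahlo \<kappa>"
    and "A \<subseteq> {x. x < \<kappa>}"
    and "stationary \<kappa> A"
    and "\<forall>a\<in>A. regular a"
  shows "\<kappa> \<in> spec A"
proof -
  have reg: "regular \<kappa>" and unc: "uncountable {x. x < \<kappa>}"
    using assms(1) unfolding mahlo_def inaccessible_def by auto
  have "\<exists>x. x < a" if "a \<in> A" for a
  proof -
    have "{x. x < a} \<noteq> {}" using assms(4) that infinite_imp_nonempty unfolding regular_def by blast
    thus ?thesis by blast
  qed
  hence F_sub: "diag_fun A ` {x. x < \<kappa>} \<subseteq> prodA A" using diag_fun_in_prodA by blast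
  have "inj_on (diag_fun A) {x. x < \<kappa>}"
    using inj_on_diag_fun stationary_unbounded[OF reg assms(3)] by blast
  hence F_eqpoll: "diag_fun A ` {x. x < \<kappa>} \<approx> {x. x < \<kappa>}" by (rule inj_on_image_eqpoll_self)
  have "\<not> bounded_in A G" if G: "G \<subseteq> diag_fun A ` {x. x < \<kappa>}" "G \<approx> {x. x < \<kappa>}" for G
  proof -
    define X where "X = {\<alpha>. \<alpha> < \<kappa> \<and> diag_fun A \<alpha> \<in> G}"
    have G_eq: "G = diag_fun A ` X" using G(1) unfolding X_def by auto
    have "{x. x < \<kappa>} \<lesssim> G" using G(2) eqpoll_sym eqpoll_imp_lepoll by blast
    also have "G \<lesssim> X" unfolding G_eq by (rule image_lepoll)
    finally have "\<forall>b<\<kappa>. \<exists>x\<in>X. b \<le> x"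
      using cardinal_unbounded_if_lepoll reg unfolding regular_def by blast
    thus ?thesis
      unfolding G_eq by (intro diag_fun_image_not_bounded[OF reg unc assms(3)]) (auto simp: X_def)
  qed
  with reg F_sub F_eqpoll show ?thesis unfolding spec_def by blast
qed

end
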